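(* For every integer $n\ge6$, $B(n)\ge 2^{\lceil n/2\rceil}$.
   Context: Fix a field $\mathbb{F}$. All algebras are finite-dimensional, unital, not necessarily associative $\mathbb{F}$-algebras. For a finite generating set $S$ of an algebra $\mathcal{A}$, a word in $S$ is any product (with any bracketing) of finitely many elements of $S$; its length is the number of factors, and $1$ is a word of length $0$. $L_i(S)$ is the linear span of all words in $S$ of length at most $i$. The length of $S$ is $l(S)=\min\{k\ge0: L_k(S)=\mathcal{A}\}$, and $l(\mathcal{A})=\max\{l(S): S\text{ a finite generating set of }\mathcal{A}\}$. For a natural number $n\ge2$, $B(n)$ denotes the maximal integer $l>0$ such that for every $j\in\{1,\ldots,l\}$ there exists an algebra of dimension $n$ and length $j$. *)

theory Defs
  imports Complex_Main
begin

text \<open>An n-dimensional (not necessarily associative) algebra over a field 'a is modelled,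
  up to isomorphism, as F^n = vectors nat => 'a supported on {0..<n}, with a bilinear
  multiplication given by structure constants c i j k, i.e. e_i * e_j = sum_k c i j k e_k.\<close>

definition vecs :: "nat \<Rightarrow> (nat \<Rightarrow> 'a::field) set" where
  "vecs n = {v. \<forall>i\<ge>n. v i = 0}"

definition amult :: "nat \<Rightarrow> (nat \<Rightarrow> nat \<Rightarrow> nat \<Rightarrow> 'a::field)
    \<Rightarrow> (nat \<Rightarrow> 'a) \<Rightarrow> (nat \<Rightarrow> 'a) \<Rightarrow> (nat \<Rightarrow> 'a)" where
  "amult n c x y = (\<lambda>k. if k < n then (\<Sum>i<n. \<Sum>j<n. x i * y j * c i j k) else 0)"

definition is_unital_alg :: "nat \<Rightarrow> (nat \<Rightarrow> nat \<Rightarrow> nat \<Rightarrow> 'a::field) \<Rightarrow> (nat \<Rightarrow> 'a) \<Rightarrow> bool" where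
  "is_unital_alg n c e \<longleftrightarrow> e \<in> vecs n \<and>
     (\<forall>x\<in>vecs n. amult n c e x = x \<and> amult n c x e = x)"

inductive_set words :: "nat \<Rightarrow> (nat \<Rightarrow> nat \<Rightarrow> nat \<Rightarrow> 'a::field) \<Rightarrow> (nat \<Rightarrow> 'a)
    \<Rightarrow> (nat \<Rightarrow> 'a) set \<Rightarrow> ((nat \<Rightarrow> 'a) \<times> nat) set"
  for n c e S where
  unit_word: "(e, 0) \<in> words n c e S"
| gen_word: "s \<in> S \<Longrightarrow> (s, 1) \<in> words n c e S"
| mult_word: "(u, i) \<in> words n c e S \<Longrightarrow> (w, j) \<in> words n c e S
      \<Longrightarrow> (amult n c u w, i + j) \<in> words n c e S"

definition lin_span :: "(nat \<Rightarrow> 'a::field) set \<Rightarrow> (nat \<Rightarrow> 'a) set" where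
  "lin_span W = {v. \<exists>T f. finite T \<and> T \<subseteq> W \<and> v = (\<lambda>k. \<Sum>w\<in>T. f w * w k)}"

definition Lspan :: "nat \<Rightarrow> (nat \<Rightarrow> nat \<Rightarrow> nat \<Rightarrow> 'a::field) \<Rightarrow> (nat \<Rightarrow> 'a)
    \<Rightarrow> (nat \<Rightarrow> 'a) set \<Rightarrow> nat \<Rightarrow> (nat \<Rightarrow> 'a) set" where
  "Lspan n c e S i = lin_span {w. \<exists>k\<le>i. (w, k) \<in> words n c e S}"

definition generating_set :: "nat \<Rightarrow> (nat \<Rightarrow> nat \<Rightarrow> nat \<Rightarrow> 'a::field) \<Rightarrow> (nat \<Rightarrow> 'a)
    \<Rightarrow> (nat \<Rightarrow> 'a) set \<Rightarrow> bool" where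
  "generating_set n c e S \<longleftrightarrow> finite S \<and> S \<subseteq> vecs n \<and> (\<exists>k. Lspan n c e S k = vecs n)"

definition set_length :: "nat \<Rightarrow> (nat \<Rightarrow> nat \<Rightarrow> nat \<Rightarrow> 'a::field) \<Rightarrow> (nat \<Rightarrow> 'a)
    \<Rightarrow> (nat \<Rightarrow> 'a) set \<Rightarrow> nat" where
  "set_length n c e S = (LEAST k. Lspan n c e S k = vecs n)"

definition alg_length :: "nat \<Rightarrow> (nat \<Rightarrow> nat \<Rightarrow> nat \<Rightarrow> 'a::field) \<Rightarrow> (nat \<Rightarrow> 'a) \<Rightarrow> nat" where
  "alg_length n c e = Max {set_length n c e S | S. generating_set n c e S}"

definition has_alg_of_dim_length :: "'a::field itself \<Rightarrow> nat \<Rightarrow> nat \<Rightarrow> bool" where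
  "has_alg_of_dim_length (_ :: 'a itself) n j \<longleftrightarrow>
     (\<exists>(c :: nat \<Rightarrow> nat \<Rightarrow> nat \<Rightarrow> 'a) e. is_unital_alg n c e \<and> alg_length n c e = j)"

end

theory Submission
  imports Defs "HOL-Library.Function_Algebras"
begin

text \<open>
  Fix a pointer function p with p t \<le> t and consider the algebra with unit e_0 and further basis
  vectors e_1, ..., e_(n-1) in which e_(t+1) e_(p t + 1) = e_(t+2) for t < k and all other products
  of non-unit basis vectors vanish. The vector e_(t+1) is then first reached by words of length
  l t, where l 0 = 1 and l (t+1) = l t + l (p t): the values l t form a star addition chain.
  Modulo the chain coordinates 2, ..., k+1 every generating set already spans the algebra with
  words of length at most 1, and climbing the chain shows that every generating set has length
  at most l k, while {e_1, e_(k+2), ..., e_(n-1)} needs exactly l k. So the value of every star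
  chain with at most n - 2 steps is the length of an n-dimensional algebra. Finally, since the
  steps j \<mapsto> 2j and j \<mapsto> 2j + 1 cost two chain steps, star chains with K \<ge> 4 steps reach every
  number up to 2^((K+3) div 2), starting from explicit chains for K = 4 and K = 5.
\<close>

section \<open>Star chains\<close>

text \<open>Clamping turns every s into a valid pointer, so a chain can be modified at a single step
  by a function update without side conditions.\<close>

definition star_ptr :: "(nat \<Rightarrow> nat) \<Rightarrow> nat \<Rightarrow> nat" where
  "star_ptr s t = min t (s t)"

lemma star_ptr_le: "star_ptr s t \<le> t"
  by (simp add: star_ptr_def)

function star_chain :: "(nat \<Rightarrow> nat) \<Rightarrow> nat \<Rightarrow> nat" where
  "star_chain s 0 = 1"
| "star_chain s (Suc t) = star_chain s t + star_chain s (star_ptr s t)"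
  by pat_completeness auto
termination by (relation "measure snd") (auto simp: star_ptr_def)

lemma star_chain_cong:
  assumes "\<And>t'. t' < t \<Longrightarrow> s t' = s' t'"
  shows "star_chain s t = star_chain s' t"
  using assms
proof (induction t rule: less_induct)
  case (less t)
  show ?case
  proof (cases t)
    case (Suc u)
    have "star_ptr s u = star_ptr s' u"
      using less.prems Suc by (simp add: star_ptr_def)
    moreover have "star_chain s u = star_chain s' u"
      using less Suc by simp
    moreover have "star_chain s (star_ptr s u) = star_chain s' (star_ptr s u)"
      using less Suc star_ptr_le[of s u] by simp
    ultimately show ?thesis
      using Suc by simp
  qed simp
qed

lemma star_chain_fun_upd:
  assumes "i \<le> k"
  shows "star_chain (s(k := i)) (Suc k) = star_chain s k + star_chain s i"
proof -
  have "star_ptr (s(k := i)) k = i"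
    using assms by (simp add: star_ptr_def)
  moreover have "star_chain (s(k := i)) k = star_chain s k"
    by (rule star_chain_cong) simp
  moreover have "star_chain (s(k := i)) i = star_chain s i"
    by (rule star_chain_cong) (use assms in simp)
  ultimately show ?thesis
    by simp
qed

definition star_reachable :: "nat \<Rightarrow> nat \<Rightarrow> bool" where
  "star_reachable j K \<longleftrightarrow> (\<exists>s k. k \<le> K \<and> star_chain s k = j)"

lemma star_reachable_one: "star_reachable 1 K"
  unfolding star_reachable_def by (meson le0 star_chain.simps(1))

lemma star_reachable_mono: "star_reachable j K \<Longrightarrow> K \<le> K' \<Longrightarrow> star_reachable j K'"
  unfolding star_reachable_def using order_trans by blast

lemma star_reachable_add_self:
  assumes "star_reachable j K"
  shows "star_reachable (2 * j) (Suc K)"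
proof -
  obtain s k where "k \<le> K" "star_chain s k = j"
    using assms unfolding star_reachable_def by blast
  then show ?thesis
    unfolding star_reachable_def
    by (intro exI[of _ "s(k := k)"] exI[of _ "Suc k"]) (simp add: star_chain_fun_upd del: star_chain.simps(2))
qed

lemma star_reachable_add_one:
  assumes "star_reachable j K"
  shows "star_reachable (Suc j) (Suc K)"
proof -
  obtain s k where "k \<le> K" "star_chain s k = j"
    using assms unfolding star_reachable_def by blast
  then show ?thesis
    unfolding star_reachable_def
    by (intro exI[of _ "s(k := 0)"] exI[of _ "Suc k"]) (simp add: star_chain_fun_upd del: star_chain.simps(2))
qed

lemma star_reachable_power2: "star_reachable (2 ^ m) m"
proof (induction m)
  case 0
  show ?case
    using star_reachable_one[of 0] by simp
qed (simp add: star_reachable_add_self)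

lemma star_reachable_double_range:
  assumes "\<forall>j\<in>{1..N}. star_reachable j K"
  shows "\<forall>j\<in>{1..2 * N + 1}. star_reachable j (Suc (Suc K))"
proof
  fix j assume j: "j \<in> {1..2 * N + 1}"
  define j' where "j' = j div 2"
  have j': "j = 2 * j' \<or> j = Suc (2 * j')"
    unfolding j'_def by presburger
  show "star_reachable j (Suc (Suc K))"
  proof (cases "j' = 0")
    case True
    then show ?thesis
      using j j' star_reachable_one by auto
  next
    case False
    then have double: "star_reachable (2 * j') (Suc K)"
      using assms j j' by (intro star_reachable_add_self) auto
    then have "star_reachable (Suc (2 * j')) (Suc (Suc K))"
      by (rule star_reachable_add_one)
    moreover have "star_reachable (2 * j') (Suc (Suc K))"
      using double by (rule star_reachable_mono) simp
    ultimately show ?thesis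
      using j' by auto
  qed
qed

lemma star_reachable_15: "star_reachable 15 5"
proof -
  \<comment> \<open>the chain 1, 2, 4, 5, 10, 15\<close>
  define s :: "nat \<Rightarrow> nat" where "s = (\<lambda>t. if t = 2 then 0 else if t = 4 then 3 else t)"
  have "star_chain s 5 = 15"
    by (simp add: s_def star_ptr_def eval_nat_numeral)
  then show ?thesis
    unfolding star_reachable_def by blast
qed

lemma star_reachable_upto_8: "j \<in> {1..8} \<Longrightarrow> star_reachable j 4"
proof -
  have "\<forall>j\<in>{1..3}. star_reachable j 2"
    using star_reachable_double_range[of 1 0] star_reachable_one by (simp add: numeral_2_eq_2)
  then have "\<forall>j\<in>{1..7}. star_reachable j 4"
    using star_reachable_double_range[of 3 2] by (simp add: eval_nat_numeral)
  moreover have "star_reachable 8 4"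
    using star_reachable_power2[of 3] star_reachable_mono by fastforce
  ultimately show "j \<in> {1..8} \<Longrightarrow> star_reachable j 4"
    by (cases "j = 8") auto
qed

lemma star_reachable_upto_16: "j \<in> {1..16} \<Longrightarrow> star_reachable j 5"
proof -
  have "\<forall>j\<in>{1..2}. star_reachable j 1"
    using star_reachable_one star_reachable_power2[of 1] by (auto simp: numeral_2_eq_2 le_Suc_eq)
  then have "\<forall>j\<in>{1..5}. star_reachable j 3"
    using star_reachable_double_range[of 2 1] by (simp add: eval_nat_numeral)
  moreover have "star_reachable 6 3"
    using star_reachable_add_self[OF star_reachable_add_one[OF star_reachable_power2[of 1]]]
    by (simp add: eval_nat_numeral)
  ultimately have "\<forall>j\<in>{1..6}. star_reachable j 3"
    by (auto simp: eval_nat_numeral le_Suc_eq)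
  then have "\<forall>j\<in>{1..13}. star_reachable j 5"
    using star_reachable_double_range[of 6 3] by (simp add: eval_nat_numeral)
  moreover have "star_reachable 14 5"
    using star_reachable_add_self[of 7 4] star_reachable_upto_8 by simp
  moreover have "star_reachable 16 5"
    using star_reachable_mono[OF star_reachable_power2[of 4]] by simp
  moreover have "j \<in> {1..13} \<or> j \<in> {14, 15, 16}" if "j \<in> {1..16}"
    using that by auto
  ultimately show "j \<in> {1..16} \<Longrightarrow> star_reachable j 5"
    using star_reachable_15 by blast
qed

lemma star_reachable_upto:
  assumes "4 \<le> K" and "j \<in> {1..2 ^ ((K + 3) div 2)}"
  shows "star_reachable j K"
  using assms
proof (induction K arbitrary: j rule: less_induct)
  case (less K)
  consider "K = 4" | "K = 5" | "6 \<le> K"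
    using less.prems(1) by linarith
  then show ?case
  proof cases
    case 3
    define N :: nat where "N = 2 ^ ((K + 1) div 2)"
    have "K - 2 + 3 = K + 1" "Suc (Suc (K - 2)) = K"
      using 3 by simp_all
    then have "\<forall>j\<in>{1..N}. star_reachable j (K - 2)"
      using less.IH[of "K - 2"] 3 unfolding N_def by simp
    then have "\<forall>j\<in>{1..2 * N + 1}. star_reachable j K"
      using star_reachable_double_range \<open>Suc (Suc (K - 2)) = K\<close> by metis
    moreover have "2 ^ ((K + 3) div 2) = 2 * N"
      unfolding N_def using 3 by (simp flip: power_Suc)
    ultimately show ?thesis
      using less.prems(2) by simp
  qed (use less.prems star_reachable_upto_8 star_reachable_upto_16 in auto)
qed

section \<open>Spans of words and lengths\<close>

interpretation vec: module "\<lambda>(a::'a::field) (x::nat \<Rightarrow> 'a) k. a * x k"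
  by standard (auto simp: fun_eq_iff algebra_simps)

lemma sum_fun_apply: "(\<Sum>a\<in>A. f a) x = (\<Sum>a\<in>A. f a x)"
  by (induction A rule: infinite_finite_induct) auto

lemma lin_span_eq_span: "lin_span W = vec.span W"
  unfolding lin_span_def vec.span_explicit by (auto simp: sum_fun_apply fun_eq_iff)

lemma Lspan_eq_span: "Lspan n c e S i = vec.span {w. \<exists>k\<le>i. (w, k) \<in> words n c e S}"
  by (simp add: Lspan_def lin_span_eq_span)

lemma word_in_Lspan: "(w, k) \<in> words n c e S \<Longrightarrow> k \<le> i \<Longrightarrow> w \<in> Lspan n c e S i"
  unfolding Lspan_eq_span by (rule vec.span_base) blast

lemma Lspan_mono: "i \<le> j \<Longrightarrow> Lspan n c e S i \<subseteq> Lspan n c e S j"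
  unfolding Lspan_eq_span by (rule vec.span_mono) (blast intro: order_trans)

lemma words_vecs:
  "(w, k) \<in> words n c e S \<Longrightarrow> e \<in> vecs n \<Longrightarrow> S \<subseteq> vecs n \<Longrightarrow> w \<in> vecs n"
  by (induction rule: words.induct) (auto simp: vecs_def amult_def)

lemma subspace_vecs: "vec.subspace (vecs n)"
  by (rule vec.subspaceI) (auto simp: vecs_def)

lemma Lspan_vecs: "e \<in> vecs n \<Longrightarrow> S \<subseteq> vecs n \<Longrightarrow> Lspan n c e S i \<subseteq> vecs n"
  unfolding Lspan_eq_span by (rule vec.span_minimal) (auto intro: words_vecs subspace_vecs)

lemma amult_linear_left:
  "amult n c ((\<lambda>k. a * x k) + y) z = (\<lambda>k. a * amult n c x z k) + amult n c y z"
  by (auto simp: amult_def fun_eq_iff algebra_simps sum.distrib sum_distrib_left)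

lemma amult_linear_right:
  "amult n c z ((\<lambda>k. a * x k) + y) = (\<lambda>k. a * amult n c z x k) + amult n c z y"
  by (auto simp: amult_def fun_eq_iff algebra_simps sum.distrib sum_distrib_left)

lemma amult_zero_left: "amult n c 0 z = 0"
  and amult_zero_right: "amult n c z 0 = 0"
  by (auto simp: amult_def fun_eq_iff)

lemma amult_span:
  assumes "x \<in> vec.span A" and "y \<in> vec.span B"
  shows "amult n c x y \<in> vec.span {amult n c a b | a b. a \<in> A \<and> b \<in> B}"
proof -
  let ?AB = "vec.span {amult n c a b | a b. a \<in> A \<and> b \<in> B}"
  have "amult n c a y \<in> ?AB" if "a \<in> A" for a
    using assms(2)
  proof (induction rule: vec.span_induct_alt)
    case base
    show ?case
      by (simp only: amult_zero_right vec.span_zero)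
  next
    case (step c' b y)
    show ?case
      unfolding amult_linear_right
      by (intro vec.span_add vec.span_scale vec.span_base step.IH) (use step.hyps that in blast)
  qed
  with assms(1) show ?thesis
  proof (induction rule: vec.span_induct_alt)
    case base
    show ?case
      by (simp only: amult_zero_left vec.span_zero)
  next
    case (step c' a x)
    show ?case
      unfolding amult_linear_left by (intro vec.span_add vec.span_scale step)
  qed
qed

lemma Lspan_mult:
  assumes "x \<in> Lspan n c e S i" and "y \<in> Lspan n c e S j"
  shows "amult n c x y \<in> Lspan n c e S (i + j)"
proof -
  let ?W = "\<lambda>i. {w. \<exists>k\<le>i. (w, k) \<in> words n c e S}"
  have "amult n c x y \<in> vec.span {amult n c a b | a b. a \<in> ?W i \<and> b \<in> ?W j}"
    using assms unfolding Lspan_eq_span by (rule amult_span)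
  also have "\<dots> \<subseteq> Lspan n c e S (i + j)"
    unfolding Lspan_eq_span
  proof (rule vec.span_mono, safe)
    fix a b k k' assume "k \<le> i" "(a, k) \<in> words n c e S" "k' \<le> j" "(b, k') \<in> words n c e S"
    then show "\<exists>k''\<le>i + j. (amult n c a b, k'') \<in> words n c e S"
      by (intro exI[of _ "k + k'"]) (auto intro: words.mult_word)
  qed
  finally show ?thesis .
qed

lemma set_length_eqI:
  assumes "Lspan n c e S m = vecs n" and "\<And>i. i < m \<Longrightarrow> Lspan n c e S i \<noteq> vecs n"
  shows "set_length n c e S = m"
  unfolding set_length_def
  by (rule Least_equality) (use assms not_less in blast)+

lemma set_length_le: "Lspan n c e S m = vecs n \<Longrightarrow> set_length n c e S \<le> m"
  unfolding set_length_def by (rule Least_le)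

lemma alg_length_eqI:
  assumes "generating_set n c e S" and "set_length n c e S = m"
    and "\<And>S'. generating_set n c e S' \<Longrightarrow> set_length n c e S' \<le> m"
  shows "alg_length n c e = m"
  unfolding alg_length_def
proof (rule Max_eqI)
  show "finite {set_length n c e S |S. generating_set n c e S}"
    by (rule finite_subset[of _ "{..m}"]) (use assms(3) in auto)
qed (use assms in auto)

section \<open>The chain algebra\<close>

lemma sum_sum_delta:
  fixes f :: "nat \<Rightarrow> nat \<Rightarrow> 'a::comm_monoid_add"
  shows "(\<Sum>i<n. \<Sum>j<m. if i = a \<and> j = b then f i j else 0) = (if a < n \<and> b < m then f a b else 0)"
proof -
  have "(\<Sum>j<m. if i = a \<and> j = b then f i j else 0) = (if i = a then if b < m then f a b else 0 else 0)"
    for i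
    by (cases "i = a") (simp_all add: sum.delta')
  then show ?thesis
    by (simp add: sum.delta')
qed

definition unit_vec :: "nat \<Rightarrow> nat \<Rightarrow> 'a::field" where
  "unit_vec r = (\<lambda>i. if i = r then 1 else 0)"

lemma unit_vec_vecs: "r < n \<Longrightarrow> unit_vec r \<in> vecs n"
  by (simp add: unit_vec_def vecs_def)

text \<open>The unit is e_0, and e_(l-1) e_(p (l-2) + 1) = e_l for 2 \<le> l \<le> k + 1 with p = star_ptr s;
  all other products of basis vectors vanish.\<close>

definition chain_alg :: "nat \<Rightarrow> (nat \<Rightarrow> nat) \<Rightarrow> nat \<Rightarrow> nat \<Rightarrow> nat \<Rightarrow> 'a::field" where
  "chain_alg k s i j l =
     (if i = 0 \<and> j = l then 1 else 0) + (if 0 < l \<and> i = l \<and> j = 0 then 1 else 0)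
     + (if 2 \<le> l \<and> l \<le> k + 1 \<and> i = l - 1 \<and> j = star_ptr s (l - 2) + 1 then 1 else 0)"

lemma amult_chain_alg:
  assumes "k + 2 \<le> n"
  shows "amult n (chain_alg k s) u w l =
    (if l < n then u 0 * w l + (if 0 < l then u l * w 0 else 0)
       + (if 2 \<le> l \<and> l \<le> k + 1 then u (l - 1) * w (star_ptr s (l - 2) + 1) else 0)
     else 0)"
proof (cases "l < n")
  case True
  let ?f = "\<lambda>i j. u i * w j"
  have split: "?f i j * chain_alg k s i j l =
      (if i = 0 \<and> j = l then ?f i j else 0)
    + (if i = l \<and> j = 0 then if 0 < l then ?f i j else 0 else 0)
    + (if i = l - 1 \<and> j = star_ptr s (l - 2) + 1 then
         if 2 \<le> l \<and> l \<le> k + 1 then ?f i j else 0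
       else 0)"
    for i j
    by (auto simp: chain_alg_def distrib_left)
  have ptr_bound: "star_ptr s (l - 2) + 1 < n" if "l \<le> k + 1"
    using that assms star_ptr_le[of s "l - 2"] by linarith
  have "amult n (chain_alg k s) u w l =
      (if 0 < n \<and> l < n then ?f 0 l else 0)
    + (if l < n \<and> 0 < n then if 0 < l then ?f l 0 else 0 else 0)
    + (if l - 1 < n \<and> star_ptr s (l - 2) + 1 < n then
         if 2 \<le> l \<and> l \<le> k + 1 then ?f (l - 1) (star_ptr s (l - 2) + 1) else 0
       else 0)"
    using True by (simp only: amult_def split sum.distrib sum_sum_delta if_True)
  then show ?thesis
    using True ptr_bound by auto
qed (simp add: amult_def)

lemma chain_alg_unital:
  assumes "k + 2 \<le> n"
  shows "is_unital_alg n (chain_alg k s :: nat \<Rightarrow> nat \<Rightarrow> nat \<Rightarrow> 'a::field) (unit_vec 0)"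
  unfolding is_unital_alg_def
proof (intro conjI ballI)
  show "(unit_vec 0 :: nat \<Rightarrow> 'a) \<in> vecs n"
    using assms by (simp add: unit_vec_vecs)
  fix x :: "nat \<Rightarrow> 'a" assume "x \<in> vecs n"
  then show "amult n (chain_alg k s) (unit_vec 0) x = x"
    and "amult n (chain_alg k s) x (unit_vec 0) = x"
    by (auto simp: fun_eq_iff amult_chain_alg[OF assms] unit_vec_def vecs_def)
qed

section \<open>Length of the chain algebra\<close>

definition agree_outside :: "nat \<Rightarrow> nat set \<Rightarrow> (nat \<Rightarrow> 'a) \<Rightarrow> (nat \<Rightarrow> 'a) \<Rightarrow> bool" where
  "agree_outside n R v x \<longleftrightarrow> (\<forall>r<n. r \<notin> R \<longrightarrow> v r = x r)"

text \<open>That is, vecs n \<subseteq> V + span {unit_vec r | r. r \<in> R}.\<close>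

definition spans_outside :: "nat \<Rightarrow> (nat \<Rightarrow> 'a::field) set \<Rightarrow> nat set \<Rightarrow> bool" where
  "spans_outside n V R \<longleftrightarrow> (\<forall>v\<in>vecs n. \<exists>x\<in>V. agree_outside n R v x)"

lemma agree_outsideD: "agree_outside n R v x \<Longrightarrow> r < n \<Longrightarrow> r \<notin> R \<Longrightarrow> v r = x r"
  by (simp add: agree_outside_def)

lemma subspace_agree_outside:
  assumes "vec.subspace V"
  shows "vec.subspace {x. \<exists>y\<in>V. agree_outside n R x y}"
    (is "vec.subspace ?Q")
proof (rule vec.subspaceI)
  show "0 \<in> ?Q"
    using vec.subspace_0[OF assms] by (intro CollectI bexI[of _ 0]) (simp_all add: agree_outside_def)
next
  fix x y assume "x \<in> ?Q" "y \<in> ?Q"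
  then obtain x' y' where "x' \<in> V" "agree_outside n R x x'" "y' \<in> V" "agree_outside n R y y'"
    by blast
  then show "x + y \<in> ?Q"
    using vec.subspace_add[OF assms]
    by (intro CollectI bexI[of _ "x' + y'"]) (auto simp: agree_outside_def)
next
  fix c x assume "x \<in> ?Q"
  then obtain x' where "x' \<in> V" "agree_outside n R x x'"
    by blast
  then show "(\<lambda>k. c * x k) \<in> ?Q"
    using vec.subspace_scale[OF assms]
    by (intro CollectI bexI[of _ "\<lambda>k. c * x' k"]) (auto simp: agree_outside_def)
qed

lemma generating_set_spans_outside:
  fixes S :: "(nat \<Rightarrow> 'a::field) set"
  assumes "k + 2 \<le> n" and "generating_set n (chain_alg k s) (unit_vec 0) S"
  shows "spans_outside n (Lspan n (chain_alg k s) (unit_vec 0) S 1) {2..k + 1}"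
proof -
  let ?L = "Lspan n (chain_alg k s) (unit_vec 0) S"
  let ?Q = "{x. \<exists>y\<in>?L 1. agree_outside n {2..k + 1} x y}"
  have subspace: "vec.subspace ?Q"
    unfolding Lspan_eq_span by (intro subspace_agree_outside vec.subspace_span)
  have in_Q: "w \<in> ?Q" if "w \<in> ?L 1" for w
    using that by (auto simp: agree_outside_def)
  have words: "w \<in> ?Q" if "(w, i) \<in> words n (chain_alg k s) (unit_vec 0) S" for w i
    using that
  proof (induction rule: words.induct)
    case unit_word
    show ?case
      by (rule in_Q, rule word_in_Lspan[OF words.unit_word]) simp
  next
    case (gen_word g)
    show ?case
      by (rule in_Q, rule word_in_Lspan[OF words.gen_word[OF gen_word]]) simp
  next
    case (mult_word u i w j)
    then obtain y z where y: "y \<in> ?L 1" "agree_outside n {2..k + 1} u y"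
      and z: "z \<in> ?L 1" "agree_outside n {2..k + 1} w z"
      by blast
    have e: "unit_vec 0 \<in> ?L 1"
      by (rule word_in_Lspan[OF words.unit_word]) simp
    \<comment> \<open>off the chain coordinates, u w = u_0 w + w_0 u - u_0 w_0 e_0\<close>
    define x where "x = (\<lambda>r. u 0 * z r + w 0 * y r + (- (u 0 * w 0)) * unit_vec 0 r)"
    have "x \<in> ?L 1"
      using y(1) z(1) e unfolding x_def Lspan_eq_span
      by (intro vec.span_add[unfolded plus_fun_def] vec.span_scale)
    moreover have "agree_outside n {2..k + 1} (amult n (chain_alg k s) u w) x"
      using y(2) z(2) assms(1)
      by (auto simp: agree_outside_def amult_chain_alg x_def unit_vec_def algebra_simps)
    ultimately show ?case
      by blast
  qed
  obtain m where "?L m = vecs n"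
    using assms(2) unfolding generating_set_def by blast
  moreover have "?L m \<subseteq> ?Q"
    unfolding Lspan_eq_span[where i = m] using words subspace by (intro vec.span_minimal) blast+
  ultimately show ?thesis
    unfolding spans_outside_def by blast
qed

lemma chain_alg_mult_agree:
  assumes "k + 2 \<le> n" and "t < k"
    and "agree_outside n {t + 2..k + 1} (unit_vec (t + 1)) x"
    and "agree_outside n {star_ptr s t + 2..k + 1} (unit_vec (star_ptr s t + 1)) y"
  shows "agree_outside n {Suc t + 2..k + 1} (unit_vec (Suc t + 1)) (amult n (chain_alg k s) x y)"
  unfolding agree_outside_def
proof (intro allI impI)
  fix r assume r: "r < n" "r \<notin> {Suc t + 2..k + 1}"
  have "x 0 = 0" "y 0 = 0"
    using agree_outsideD[OF assms(3), of 0] agree_outsideD[OF assms(4), of 0] assms(1)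
    by (simp_all add: unit_vec_def)
  moreover have "star_ptr s t + 1 < n"
    using assms(1,2) star_ptr_le[of s t] by linarith
  then have "y (star_ptr s t + 1) = 1"
    using agree_outsideD[OF assms(4), of "star_ptr s t + 1"] by (simp add: unit_vec_def)
  moreover have "x (r - 1) = unit_vec (t + 1) (r - 1)" if "2 \<le> r" "r \<le> k + 1"
    using agree_outsideD[OF assms(3), of "r - 1"] r that by simp
  ultimately show "unit_vec (Suc t + 1) r = amult n (chain_alg k s) x y r"
    using r assms(2) by (auto simp: amult_chain_alg[OF assms(1)] unit_vec_def)
qed

lemma spans_outside_shrink:
  fixes V W :: "(nat \<Rightarrow> 'a::field) set"
  assumes "spans_outside n V (insert r R)" and "r \<notin> R"
    and "vec.subspace W" and "V \<subseteq> W" and "z \<in> W" and "agree_outside n R (unit_vec r) z"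
  shows "spans_outside n W R"
  unfolding spans_outside_def
proof
  fix v :: "nat \<Rightarrow> 'a" assume "v \<in> vecs n"
  then obtain x where x: "x \<in> V" "agree_outside n (insert r R) v x"
    using assms(1) unfolding spans_outside_def by blast
  define c where "c = v r - x r"
  have "x + (\<lambda>q. c * z q) \<in> W"
    using x(1) assms(3-5) by (blast intro: vec.subspace_add vec.subspace_scale)
  moreover have "agree_outside n R v (x + (\<lambda>q. c * z q))"
    unfolding agree_outside_def
  proof (intro allI impI)
    fix q assume q: "q < n" "q \<notin> R"
    have "z q = unit_vec r q"
      using agree_outsideD[OF assms(6) q] by simp
    moreover have "v q = x q" if "q \<noteq> r"
      using agree_outsideD[OF x(2) q(1)] q(2) that by simp
    ultimately show "v q = (x + (\<lambda>q. c * z q)) q"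
      by (cases "q = r") (simp_all add: c_def unit_vec_def)
  qed
  ultimately show "\<exists>x\<in>W. agree_outside n R v x"
    by blast
qed

lemma spans_outside_chain_step:
  fixes S :: "(nat \<Rightarrow> 'a::field) set"
  assumes "k + 2 \<le> n" and "t < k"
    and "spans_outside n (Lspan n (chain_alg k s) (unit_vec 0) S i) {t + 2..k + 1}"
    and "spans_outside n (Lspan n (chain_alg k s) (unit_vec 0) S j) {star_ptr s t + 2..k + 1}"
  shows "spans_outside n (Lspan n (chain_alg k s) (unit_vec 0) S (i + j)) {Suc t + 2..k + 1}"
proof -
  let ?L = "Lspan n (chain_alg k s) (unit_vec 0) S"
  have "unit_vec (t + 1) \<in> vecs n" "unit_vec (star_ptr s t + 1) \<in> vecs n"
    using assms(1,2) star_ptr_le[of s t] by (simp_all add: unit_vec_vecs)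
  then obtain x y where x: "x \<in> ?L i" "agree_outside n {t + 2..k + 1} (unit_vec (t + 1)) x"
    and y: "y \<in> ?L j" "agree_outside n {star_ptr s t + 2..k + 1} (unit_vec (star_ptr s t + 1)) y"
    using assms(3,4) unfolding spans_outside_def by meson
  show ?thesis
  proof (rule spans_outside_shrink[where r = "Suc t + 1"])
    have "{t + 2..k + 1} = insert (Suc t + 1) {Suc t + 2..k + 1}"
      using assms(2) by auto
    then show "spans_outside n (?L i) (insert (Suc t + 1) {Suc t + 2..k + 1})"
      using assms(3) by simp
    show "vec.subspace (?L (i + j))"
      unfolding Lspan_eq_span by (rule vec.subspace_span)
    show "?L i \<subseteq> ?L (i + j)"
      by (rule Lspan_mono) simp
    show "amult n (chain_alg k s) x y \<in> ?L (i + j)"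
      by (rule Lspan_mult[OF x(1) y(1)])
    show "agree_outside n {Suc t + 2..k + 1} (unit_vec (Suc t + 1)) (amult n (chain_alg k s) x y)"
      by (rule chain_alg_mult_agree[OF assms(1,2) x(2) y(2)])
  qed simp
qed

lemma spans_outside_chain:
  assumes "k + 2 \<le> n"
    and "spans_outside n (Lspan n (chain_alg k s) (unit_vec 0) S 1) {2..k + 1}"
    and "t \<le> k"
  shows "spans_outside n (Lspan n (chain_alg k s) (unit_vec 0) S (star_chain s t)) {t + 2..k + 1}"
  using assms(3)
proof (induction t rule: less_induct)
  case (less t)
  show ?case
  proof (cases t)
    case 0
    then show ?thesis
      using assms(2) by (simp add: numeral_2_eq_2)
  next
    case (Suc u)
    have "spans_outside n (Lspan n (chain_alg k s) (unit_vec 0) S (star_chain s u)) {u + 2..k + 1}"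
      using less Suc by simp
    moreover have "spans_outside n (Lspan n (chain_alg k s) (unit_vec 0) S (star_chain s (star_ptr s u)))
        {star_ptr s u + 2..k + 1}"
      using less Suc star_ptr_le[of s u] by simp
    moreover have "u < k"
      using Suc less.prems by simp
    ultimately have "spans_outside n (Lspan n (chain_alg k s) (unit_vec 0) S
        (star_chain s u + star_chain s (star_ptr s u))) {Suc u + 2..k + 1}"
      by (intro spans_outside_chain_step[OF assms(1)])
    then show ?thesis
      using Suc by simp
  qed
qed

lemma Lspan_chain_eq_vecs:
  fixes S :: "(nat \<Rightarrow> 'a::field) set"
  assumes "k + 2 \<le> n" and "S \<subseteq> vecs n"
    and "spans_outside n (Lspan n (chain_alg k s) (unit_vec 0) S 1) {2..k + 1}"
  shows "Lspan n (chain_alg k s) (unit_vec 0) S (star_chain s k) = vecs n"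
proof
  let ?L = "Lspan n (chain_alg k s) (unit_vec 0) S (star_chain s k)"
  show sub: "?L \<subseteq> vecs n"
    using assms(1,2) by (intro Lspan_vecs unit_vec_vecs) simp_all
  show "vecs n \<subseteq> ?L"
  proof
    fix v :: "nat \<Rightarrow> 'a" assume v: "v \<in> vecs n"
    then obtain x where x: "x \<in> ?L" "agree_outside n {k + 2..k + 1} v x"
      using spans_outside_chain[OF assms(1,3) order_refl] unfolding spans_outside_def by blast
    have "v = x"
    proof
      fix r
      show "v r = x r"
      proof (cases "r < n")
        case True
        then show ?thesis
          using x(2) unfolding agree_outside_def by simp
      next
        case False
        then show ?thesis
          using v x(1) sub unfolding vecs_def by auto
      qed
    qed
    then show "v \<in> ?L"
      using x(1) by simp
  qed
qed

definition chain_gens :: "nat \<Rightarrow> nat \<Rightarrow> (nat \<Rightarrow> 'a::field) set" where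
  "chain_gens n k = unit_vec ` ({1} \<union> {k + 2..<n})"

lemma chain_gens_vecs: "k + 2 \<le> n \<Longrightarrow> chain_gens n k \<subseteq> vecs n"
  by (auto simp: chain_gens_def intro: unit_vec_vecs)

lemma chain_gens_spans_outside:
  "spans_outside n (Lspan n (chain_alg k s) (unit_vec 0) (chain_gens n k) 1) {2..k + 1}"
  unfolding spans_outside_def
proof
  let ?L = "Lspan n (chain_alg k s) (unit_vec 0) (chain_gens n k) 1"
  let ?R = "{0, 1} \<union> {k + 2..<n}"
  fix v :: "nat \<Rightarrow> 'a" assume "v \<in> vecs n"
  have gens: "unit_vec r \<in> ?L" if "r \<in> ?R" for r
  proof (cases "r = 0")
    case True
    then show ?thesis
      by (simp add: word_in_Lspan[OF words.unit_word])
  next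
    case False
    then have "unit_vec r \<in> chain_gens n k"
      using that by (auto simp: chain_gens_def)
    then show ?thesis
      by (rule word_in_Lspan[OF words.gen_word]) simp
  qed
  define x where "x = (\<Sum>r\<in>?R. (\<lambda>i. v r * unit_vec r i))"
  have "x \<in> ?L"
    unfolding x_def using gens unfolding Lspan_eq_span by (intro vec.span_sum vec.span_scale)
  moreover have "x r = (if r \<in> ?R then v r else 0)" for r
  proof -
    have "x r = (\<Sum>q\<in>?R. if q = r then v q else 0)"
      unfolding x_def sum_fun_apply unit_vec_def by (rule sum.cong) auto
    also have "\<dots> = (if r \<in> ?R then v r else 0)"
      by (rule sum.delta) simp
    finally show ?thesis .
  qed
  then have "agree_outside n {2..k + 1} v x"
    unfolding agree_outside_def by auto
  ultimately show "\<exists>x\<in>?L. agree_outside n {2..k + 1} v x"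
    by blast
qed

lemma chain_gens_words_vanish:
  assumes "k + 2 \<le> n"
    and "(w, i) \<in> words n (chain_alg k s) (unit_vec 0) (chain_gens n k)"
    and "t \<le> k" and "i < star_chain s t"
  shows "w (t + 1) = 0"
  using assms(2-4)
proof (induction arbitrary: t rule: words.induct)
  case unit_word
  then show ?case
    by (simp add: unit_vec_def)
next
  case (gen_word g)
  then have "t \<noteq> 0"
    by (cases t) auto
  then show ?case
    using gen_word by (auto simp: chain_gens_def unit_vec_def)
next
  case (mult_word u i w j)
  have "u (t + 1) = 0" "w (t + 1) = 0"
    using mult_word by simp_all
  moreover have "u t * w (star_ptr s (t - 1) + 1) = 0" if "t = Suc t'" for t'
  proof -
    have "i < star_chain s t' \<or> j < star_chain s (star_ptr s t')"
      using mult_word.prems that by auto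
    then show ?thesis
      using mult_word.IH[of t'] mult_word.IH[of "star_ptr s t'"] mult_word.prems that
        star_ptr_le[of s t'] by auto
  qed
  ultimately show ?case
    using mult_word.prems assms(1) by (cases t) (simp_all add: amult_chain_alg[OF assms(1)])
qed

lemma chain_gens_Lspan_ne:
  fixes s :: "nat \<Rightarrow> nat"
  assumes "k + 2 \<le> n" and "i < star_chain s k"
  shows "Lspan n (chain_alg k s :: nat \<Rightarrow> nat \<Rightarrow> nat \<Rightarrow> 'a::field) (unit_vec 0) (chain_gens n k) i
    \<noteq> vecs n"
proof
  let ?L = "Lspan n (chain_alg k s :: nat \<Rightarrow> nat \<Rightarrow> nat \<Rightarrow> 'a) (unit_vec 0) (chain_gens n k) i"
  assume full: "?L = vecs n"
  have "?L \<subseteq> {x. x (k + 1) = 0}"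
    unfolding Lspan_eq_span
  proof (rule vec.span_minimal)
    show "vec.subspace {x :: nat \<Rightarrow> 'a. x (k + 1) = 0}"
      by (rule vec.subspaceI) auto
  qed (use chain_gens_words_vanish[OF assms(1)] assms(2) in fastforce)
  moreover have "(unit_vec (k + 1) :: nat \<Rightarrow> 'a) \<in> vecs n"
    using assms(1) by (simp add: unit_vec_vecs)
  ultimately show False
    using full by (auto simp: unit_vec_def)
qed

lemma chain_alg_length:
  assumes "k + 2 \<le> n"
  shows "alg_length n (chain_alg k s :: nat \<Rightarrow> nat \<Rightarrow> nat \<Rightarrow> 'a::field) (unit_vec 0)
    = star_chain s k"
proof (rule alg_length_eqI)
  let ?G = "chain_gens n k :: (nat \<Rightarrow> 'a) set"
  have full: "Lspan n (chain_alg k s) (unit_vec 0) ?G (star_chain s k) = vecs n"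
    by (rule Lspan_chain_eq_vecs[OF assms chain_gens_vecs[OF assms] chain_gens_spans_outside])
  show "generating_set n (chain_alg k s) (unit_vec 0) ?G"
    unfolding generating_set_def using full chain_gens_vecs[OF assms] by (auto simp: chain_gens_def)
  show "set_length n (chain_alg k s) (unit_vec 0) ?G = star_chain s k"
    by (rule set_length_eqI[OF full chain_gens_Lspan_ne[OF assms]])
  show "set_length n (chain_alg k s) (unit_vec 0) S \<le> star_chain s k"
    if "generating_set n (chain_alg k s) (unit_vec 0) S" for S
    using that generating_set_spans_outside[OF assms that]
    by (intro set_length_le Lspan_chain_eq_vecs[OF assms]) (simp_all add: generating_set_def)
qed

lemma has_alg_of_dim_length_star_chain:
  "k + 2 \<le> n \<Longrightarrow> has_alg_of_dim_length TYPE('a::field) n (star_chain s k)"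
  unfolding has_alg_of_dim_length_def using chain_alg_unital chain_alg_length by blast

lemma nat_ceiling_half: "nat \<lceil>real n / 2\<rceil> = (n + 1) div 2"
proof -
  have "\<lceil>real n / 2\<rceil> = int ((n + 1) div 2)"
    by (subst ceiling_eq_iff) linarith
  then show ?thesis
    by simp
qed

theorem proposition4p11:
  fixes n :: nat
  assumes "n \<ge> 6"
  shows "\<forall>j\<in>{1..2 ^ nat \<lceil>real n / 2\<rceil>}. has_alg_of_dim_length TYPE('a::field) n j"
proof
  fix j :: nat assume "j \<in> {1..2 ^ nat \<lceil>real n / 2\<rceil>}"
  moreover have "nat \<lceil>real n / 2\<rceil> = (n - 2 + 3) div 2"
    using assms by (simp add: nat_ceiling_half)
  ultimately have "star_reachable j (n - 2)"
    using assms by (intro star_reachable_upto) simp_all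
  then obtain s k where "k \<le> n - 2" and "star_chain s k = j"
    unfolding star_reachable_def by blast
  then show "has_alg_of_dim_length TYPE('a) n j"
    using has_alg_of_dim_length_star_chain[where 'a = 'a, of k n s] assms by simp
qed

end
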